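(* In the one-path setting with groups $\mathcal{G}$ and junction trees $H_g$ as below, every vertex of $V(E^* )\setminus V(P)$ and every edge of $E^*\setminus E(P)$ belongs to at most $10\lfloor\log_2|P|\rfloor+12$ of the graphs $H_g$, $g\in\mathcal{G}$.
   Context: One-path setting: $G$ is a digraph, $D=\{(s_i,t_i)\}_{i\in[k]}$, $E^*\subseteq E(G)$, $P=v_0v_1\cdots v_{|P|}$ a dipath with edges in $E^*$, $|P|\ge1$ its number of edges; reachability w.r.t. $E^*$; every pair has an $s_i$-$t_i$ dipath in $E^*$ meeting $P$. $u\le_P w$ means $u$ appears no later than $w$ on $P$; $P[u,w]$ is the subpath from $u$ to $w$. $a_i$ is the $\le_P$-first vertex of $P$ reachable from $s_i$, $b_i$ the $\le_P$-last vertex of $P$ that can reach $t_i$; $I_i=P[a_i,b_i]$ with $|I_i|$ its number of edges. For each $i$, $P_{s_i}$ is a fixed dipath in $E^*$ from $s_i$ to $a_i$ and $P_{t_i}$ a fixed dipath in $E^*$ from $b_i$ to $t_i$. Groups: $D_0=\{i:a_i=b_i\}$; for $j\in\{1,\dots,\lfloor\log_2|P|\rfloor+1\}$, $D_j=\{i:2^{j-1}\le|I_i|<2^j\}$; for a vertex $v$ of $P$, $D_j^v=\{i\in D_j: v\in I_i\}$; $\mathcal{G}=\{D_0^v: v=a_i=b_i\text{ for some }i\in D_0\}\cup\bigcup_{j\ge1}\{D_j^{v_\ell}: 0\le\ell\le|P|,\ \ell\text{ a multiple of }2^{j-1}\}$. For a nonempty $g\in\mathcal{G}$, $H_g=P[a_{\mathrm{start}},b_{\mathrm{end}}]\cup\bigcup_{i\in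 g}(P_{s_i}\cup P_{t_i})$, where $a_{\mathrm{start}}$ is the $\le_P$-minimum of $\{a_i:i\in g\}$ and $b_{\mathrm{end}}$ the $\le_P$-maximum of $\{b_i:i\in g\}$. *)

theory Defs
  imports Complex_Main
begin

text \<open>The path P is the list p = [v_0,...,v_|P|],
so |P| = length p - 1 and vertex v_l is p ! l; vertices of P are handled via their indices.\<close>

definition dipath :: "('v \<times> 'v) set \<Rightarrow> 'v list \<Rightarrow> bool" where
  "dipath E xs \<longleftrightarrow> xs \<noteq> [] \<and> distinct xs \<and>
     (\<forall>j. Suc j < length xs \<longrightarrow> (xs ! j, xs ! Suc j) \<in> E)"

definition path_edges :: "'v list \<Rightarrow> ('v \<times> 'v) set" where
  "path_edges xs = {(xs ! j, xs ! Suc j) | j. Suc j < length xs}"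

definition verts_of :: "('v \<times> 'v) set \<Rightarrow> 'v set" where
  "verts_of E = fst ` E \<union> snd ` E"

definition plen :: "'v list \<Rightarrow> nat" where
  "plen p = length p - 1"

definition lg :: "nat \<Rightarrow> nat" where
  "lg L = nat \<lfloor>log 2 (real L)\<rfloor>"

text \<open>Index of a_i: the first vertex of P reachable (w.r.t. E) from u.\<close>
definition first_idx :: "('v \<times> 'v) set \<Rightarrow> 'v list \<Rightarrow> 'v \<Rightarrow> nat" where
  "first_idx E p u = (LEAST l. l < length p \<and> (u, p ! l) \<in> E\<^sup>*)"

text \<open>Index of b_i: the last vertex of P that can reach w (w.r.t. E).\<close>
definition last_idx :: "('v \<times> 'v) set \<Rightarrow> 'v list \<Rightarrow> 'v \<Rightarrow> nat" where
  "last_idx E p w = (GREATEST l. l < length p \<and> (p ! l, w) \<in> E\<^sup>*)"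

definition aidx :: "('v \<times> 'v) set \<Rightarrow> 'v list \<Rightarrow> (nat \<Rightarrow> 'v) \<Rightarrow> nat \<Rightarrow> nat" where
  "aidx E p s i = first_idx E p (s i)"

definition bidx :: "('v \<times> 'v) set \<Rightarrow> 'v list \<Rightarrow> (nat \<Rightarrow> 'v) \<Rightarrow> nat \<Rightarrow> nat" where
  "bidx E p t i = last_idx E p (t i)"

definition grpD0 :: "('v \<times> 'v) set \<Rightarrow> 'v list \<Rightarrow> (nat \<Rightarrow> 'v) \<Rightarrow> (nat \<Rightarrow> 'v) \<Rightarrow> nat \<Rightarrow> nat set" where
  "grpD0 E p s t k = {i. i < k \<and> aidx E p s i = bidx E p t i}"

definition grpD :: "('v \<times> 'v) set \<Rightarrow> 'v list \<Rightarrow> (nat \<Rightarrow> 'v) \<Rightarrow> (nat \<Rightarrow> 'v) \<Rightarrow> nat \<Rightarrow> nat \<Rightarrow> nat set" where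
  "grpD E p s t k j = {i. i < k \<and> 2 ^ (j - 1) \<le> bidx E p t i - aidx E p s i
                           \<and> bidx E p t i - aidx E p s i < 2 ^ j}"

text \<open>D^v restricted to those i with v = v_l in I_i.\<close>
definition at_vertex :: "('v \<times> 'v) set \<Rightarrow> 'v list \<Rightarrow> (nat \<Rightarrow> 'v) \<Rightarrow> (nat \<Rightarrow> 'v) \<Rightarrow> nat set \<Rightarrow> nat \<Rightarrow> nat set" where
  "at_vertex E p s t D l = {i \<in> D. aidx E p s i \<le> l \<and> l \<le> bidx E p t i}"

definition groups :: "('v \<times> 'v) set \<Rightarrow> 'v list \<Rightarrow> (nat \<Rightarrow> 'v) \<Rightarrow> (nat \<Rightarrow> 'v) \<Rightarrow> nat \<Rightarrow> nat set set" where
  "groups E p s t k =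
     {at_vertex E p s t (grpD0 E p s t k) l | l. \<exists>i \<in> grpD0 E p s t k. l = aidx E p s i}
     \<union> (\<Union>j \<in> {1..lg (plen p) + 1}.
          {at_vertex E p s t (grpD E p s t k j) l | l. l \<le> plen p \<and> 2 ^ (j - 1) dvd l})"

definition HV :: "('v \<times> 'v) set \<Rightarrow> 'v list \<Rightarrow> (nat \<Rightarrow> 'v) \<Rightarrow> (nat \<Rightarrow> 'v)
    \<Rightarrow> (nat \<Rightarrow> 'v list) \<Rightarrow> (nat \<Rightarrow> 'v list) \<Rightarrow> nat set \<Rightarrow> 'v set" where
  "HV E p s t Ps Pt g =
     {p ! l | l. Min (aidx E p s ` g) \<le> l \<and> l \<le> Max (bidx E p t ` g)}
     \<union> (\<Union>i \<in> g. set (Ps i) \<union> set (Pt i))"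

definition HE :: "('v \<times> 'v) set \<Rightarrow> 'v list \<Rightarrow> (nat \<Rightarrow> 'v) \<Rightarrow> (nat \<Rightarrow> 'v)
    \<Rightarrow> (nat \<Rightarrow> 'v list) \<Rightarrow> (nat \<Rightarrow> 'v list) \<Rightarrow> nat set \<Rightarrow> ('v \<times> 'v) set" where
  "HE E p s t Ps Pt g =
     {(p ! l, p ! Suc l) | l. Min (aidx E p s ` g) \<le> l \<and> l < Max (bidx E p t ` g)}
     \<union> (\<Union>i \<in> g. path_edges (Ps i) \<union> path_edges (Pt i))"

end

theory Submission imports Defs begin

text \<open>A vertex x off P that lies on P_{s_i} satisfies a_i = first_idx x, because s_i reaches x
and x reaches a_i; symmetrically b_i = last_idx x on P_{t_i}. Hence every H_g containing x (or an
edge leaving x) has a pair whose interval I_i contains first_idx x or last_idx x. At level j a group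
D_j^{v_l} containing such a pair has l a multiple of 2^{j-1} within distance less than 2^j of that
index, so at most four groups per level and one group of D_0 qualify, and 2 (4 lg |P| + 5) is
below the claimed bound.\<close>

lemma dipath_nth_reach:
  assumes "dipath E q" "i \<le> j" "j < length q"
  shows "(q ! i, q ! j) \<in> E\<^sup>*"
  using assms(2,3)
proof (induction j)
  case 0
  then show ?case by simp
next
  case (Suc j)
  show ?case
  proof (cases "i = Suc j")
    case False
    then have "(q ! i, q ! j) \<in> E\<^sup>*" using Suc by simp
    moreover have "(q ! j, q ! Suc j) \<in> E" using assms(1) Suc.prems unfolding dipath_def by blast
    ultimately show ?thesis by (rule rtrancl_into_rtrancl)
  qed simp
qed

lemma dipath_mem_reach:
  assumes "dipath E q" "u \<in> set q"
  shows "(hd q, u) \<in> E\<^sup>*" and "(u, last q) \<in> E\<^sup>*"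
proof -
  obtain m where m: "m < length q" "q ! m = u" using assms(2) by (meson in_set_conv_nth)
  have "q \<noteq> []" using assms(1) unfolding dipath_def by blast
  then show "(hd q, u) \<in> E\<^sup>*" "(u, last q) \<in> E\<^sup>*"
    using dipath_nth_reach[OF assms(1), of 0 m] dipath_nth_reach[OF assms(1), of m "length q - 1"] m
    by (simp_all add: hd_conv_nth last_conv_nth)
qed

lemma dipath_meeting_reach:
  assumes "dipath E q" "set q \<inter> set p \<noteq> {}"
  shows "\<exists>l<length p. (hd q, p ! l) \<in> E\<^sup>*" and "\<exists>l<length p. (p ! l, last q) \<in> E\<^sup>*"
proof -
  obtain y where y: "y \<in> set q" "y \<in> set p" using assms(2) by blast
  then obtain l where l: "l < length p" "p ! l = y" by (auto simp: in_set_conv_nth)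
  show "\<exists>l<length p. (hd q, p ! l) \<in> E\<^sup>*" using l dipath_mem_reach(1)[OF assms(1) y(1)] by blast
  show "\<exists>l<length p. (p ! l, last q) \<in> E\<^sup>*" using l dipath_mem_reach(2)[OF assms(1) y(1)] by blast
qed

lemma first_idx_reach:
  assumes "\<exists>l<length p. (w, p ! l) \<in> E\<^sup>*"
  shows "first_idx E p w < length p" and "(w, p ! first_idx E p w) \<in> E\<^sup>*"
proof -
  have "first_idx E p w < length p \<and> (w, p ! first_idx E p w) \<in> E\<^sup>*"
    unfolding first_idx_def by (rule LeastI_ex[OF assms])
  then show "first_idx E p w < length p" "(w, p ! first_idx E p w) \<in> E\<^sup>*" by blast+
qed

lemma last_idx_reach:
  assumes "\<exists>l<length p. (p ! l, w) \<in> E\<^sup>*"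
  shows "last_idx E p w < length p" and "(p ! last_idx E p w, w) \<in> E\<^sup>*"
proof -
  obtain l where "l < length p \<and> (p ! l, w) \<in> E\<^sup>*" using assms by blast
  then have "last_idx E p w < length p \<and> (p ! last_idx E p w, w) \<in> E\<^sup>*"
    unfolding last_idx_def by (rule GreatestI_nat[where b = "length p"]) auto
  then show "last_idx E p w < length p" "(p ! last_idx E p w, w) \<in> E\<^sup>*" by blast+
qed

lemma first_idx_eq_of_between:
  assumes "\<exists>l<length p. (w, p ! l) \<in> E\<^sup>*" "(w, u) \<in> E\<^sup>*" "(u, p ! first_idx E p w) \<in> E\<^sup>*"
  shows "first_idx E p u = first_idx E p w"
proof (rule antisym)
  have "first_idx E p w < length p \<and> (u, p ! first_idx E p w) \<in> E\<^sup>*"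
    using first_idx_reach(1)[OF assms(1)] assms(3) by blast
  then show "first_idx E p u \<le> first_idx E p w"
    unfolding first_idx_def by (rule Least_le)
  have "\<exists>l<length p. (u, p ! l) \<in> E\<^sup>*" using first_idx_reach(1)[OF assms(1)] assms(3) by blast
  then have "first_idx E p u < length p \<and> (w, p ! first_idx E p u) \<in> E\<^sup>*"
    using first_idx_reach rtrancl_trans[OF assms(2)] by metis
  then show "first_idx E p w \<le> first_idx E p u"
    unfolding first_idx_def by (rule Least_le)
qed

lemma last_idx_eq_of_between:
  assumes "\<exists>l<length p. (p ! l, w) \<in> E\<^sup>*" "(u, w) \<in> E\<^sup>*" "(p ! last_idx E p w, u) \<in> E\<^sup>*"
  shows "last_idx E p u = last_idx E p w"
proof (rule antisym)
  have "last_idx E p w < length p \<and> (p ! last_idx E p w, u) \<in> E\<^sup>*"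
    using last_idx_reach(1)[OF assms(1)] assms(3) by blast
  then show "last_idx E p w \<le> last_idx E p u"
    unfolding last_idx_def by (rule Greatest_le_nat[where b = "length p"]) auto
  have "\<exists>l<length p. (p ! l, u) \<in> E\<^sup>*" using last_idx_reach(1)[OF assms(1)] assms(3) by blast
  then have "last_idx E p u < length p \<and> (p ! last_idx E p u, w) \<in> E\<^sup>*"
    using last_idx_reach rtrancl_trans[OF _ assms(2)] by metis
  then show "last_idx E p u \<le> last_idx E p w"
    unfolding last_idx_def by (rule Greatest_le_nat[where b = "length p"]) auto
qed

lemma card_multiples_le:
  fixes m r :: nat
  assumes "m > 0" "finite S" "\<forall>l\<in>S. m dvd l" "\<forall>a\<in>S. \<forall>b\<in>S. b < a + r * m"
  shows "card S \<le> r"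
proof (cases "S = {}")
  case False
  have "S \<subseteq> (\<lambda>q. Min S + m * q) ` {..<r}"
  proof
    fix l assume l: "l \<in> S"
    have min: "Min S \<in> S" "Min S \<le> l" using assms(2) False l by auto
    then obtain q where q: "l - Min S = m * q" using assms(3) l by (meson dvd_diff_nat dvdE)
    have "l < Min S + m * r" using assms(4) l min(1) by (metis mult.commute)
    then have "m * q < m * r" using q min(2) by linarith
    then have "q < r" using assms(1) by simp
    moreover have "l = Min S + m * q" using q min(2) by simp
    ultimately show "l \<in> (\<lambda>q. Min S + m * q) ` {..<r}" by (intro image_eqI) auto
  qed
  then have "card S \<le> card ((\<lambda>q. Min S + m * q) ` {..<r})" by (intro card_mono) auto
  also have "\<dots> \<le> r" using card_image_le[of "{..<r}"] by simp
  finally show ?thesis .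
qed simp

definition covers :: "('v \<times> 'v) set \<Rightarrow> 'v list \<Rightarrow> (nat \<Rightarrow> 'v) \<Rightarrow> (nat \<Rightarrow> 'v) \<Rightarrow> nat set \<Rightarrow> nat \<Rightarrow> bool" where
  "covers E p s t g c \<longleftrightarrow> (\<exists>i\<in>g. aidx E p s i \<le> c \<and> c \<le> bidx E p t i)"

lemma groups_subset_lessThan: "g \<in> groups E p s t k \<Longrightarrow> g \<subseteq> {..<k}"
  unfolding groups_def at_vertex_def grpD0_def grpD_def by auto

lemma finite_groups: "finite (groups E p s t k)"
  by (rule finite_subset[of _ "Pow {..<k}"]) (auto dest: groups_subset_lessThan)

lemma aidx_le_bidx_in_group:
  assumes "g \<in> groups E p s t k" "i \<in> g"
  shows "aidx E p s i \<le> bidx E p t i"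
proof -
  obtain D l where "g = at_vertex E p s t D l" using assms(1) unfolding groups_def by blast
  then show ?thesis using assms(2) unfolding at_vertex_def by simp
qed

lemma card_groups_covering:
  "card {g \<in> groups E p s t k. covers E p s t g c} \<le> 4 * lg (plen p) + 5"
proof -
  define L where "L = lg (plen p)"
  define D where "D j = at_vertex E p s t (grpD E p s t k j)" for j
  define W where "W j = {l. 2 ^ (j - 1) dvd l \<and> l < c + 2 ^ j \<and> c < l + 2 ^ j}" for j :: nat
  have sub: "{g \<in> groups E p s t k. covers E p s t g c}
      \<subseteq> {at_vertex E p s t (grpD0 E p s t k) c} \<union> (\<Union>j\<in>{1..L+1}. D j ` W j)"
  proof
    fix g assume "g \<in> {g \<in> groups E p s t k. covers E p s t g c}"
    then obtain i where g: "g \<in> groups E p s t k" and i: "i \<in> g" "aidx E p s i \<le> c" "c \<le> bidx E p t i"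
      unfolding covers_def by blast
    from g consider (zero) l where "g = at_vertex E p s t (grpD0 E p s t k) l"
      | (level) j l where "j \<in> {1..L+1}" "2 ^ (j - 1) dvd l" "g = D j l"
      unfolding groups_def L_def D_def by blast
    then show "g \<in> {at_vertex E p s t (grpD0 E p s t k) c} \<union> (\<Union>j\<in>{1..L+1}. D j ` W j)"
    proof cases
      case (zero l)
      then have "l = c" using i unfolding at_vertex_def grpD0_def by auto
      then show ?thesis using zero by simp
    next
      case (level j l)
      then have "l \<in> W j" using i unfolding D_def W_def at_vertex_def grpD_def by auto
      then show ?thesis using level by blast
    qed
  qed
  have finW: "finite (W j)" for j
    by (rule finite_subset[of _ "{..<c + 2 ^ j}"]) (auto simp: W_def)
  have cardW: "card (D j ` W j) \<le> 4" if "j \<in> {1..L+1}" for j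
  proof -
    have "card (W j) \<le> 4"
    proof (rule card_multiples_le[of "2 ^ (j - 1)"])
      have four: "4 * 2 ^ (j - 1) = 2 * (2::nat) ^ j" using that by (cases j) auto
      show "\<forall>a\<in>W j. \<forall>b\<in>W j. b < a + 4 * 2 ^ (j - 1)"
      proof (intro ballI)
        fix a b assume "a \<in> W j" "b \<in> W j"
        then have "b < c + 2 ^ j" "c < a + 2 ^ j" unfolding W_def by simp_all
        then show "b < a + 4 * 2 ^ (j - 1)" unfolding four by linarith
      qed
      show "\<forall>l\<in>W j. 2 ^ (j - 1) dvd l" unfolding W_def by blast
    qed (simp_all add: finW)
    then show ?thesis using card_image_le[OF finW] le_trans by blast
  qed
  have "card {g \<in> groups E p s t k. covers E p s t g c}
      \<le> card ({at_vertex E p s t (grpD0 E p s t k) c} \<union> (\<Union>j\<in>{1..L+1}. D j ` W j))"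
    by (rule card_mono[OF _ sub]) (use finW in auto)
  also have "\<dots> \<le> card {at_vertex E p s t (grpD0 E p s t k) c} + card (\<Union>j\<in>{1..L+1}. D j ` W j)"
    by (rule card_Un_le)
  also have "\<dots> \<le> 1 + (\<Sum>j\<in>{1..L+1}. card (D j ` W j))"
    using card_UN_le[of "{1..L+1}" "\<lambda>j. D j ` W j"] by simp
  also have "\<dots> \<le> 1 + (\<Sum>j\<in>{1..L+1}. 4)"
    by (rule add_left_mono[OF sum_mono[OF cardW]])
  also have "\<dots> = 4 * L + 5" by simp
  finally show ?thesis unfolding L_def .
qed

lemma card_groups_covering_either:
  assumes "\<And>g. g \<in> groups E p s t k \<Longrightarrow> P g \<Longrightarrow> covers E p s t g c \<or> covers E p s t g c'"
  shows "card {g \<in> groups E p s t k. P g} \<le> 8 * lg (plen p) + 10"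
proof -
  have "card {g \<in> groups E p s t k. P g}
      \<le> card ({g \<in> groups E p s t k. covers E p s t g c} \<union> {g \<in> groups E p s t k. covers E p s t g c'})"
    by (rule card_mono) (use finite_groups[of E p s t k] assms in auto)
  also have "\<dots> \<le> card {g \<in> groups E p s t k. covers E p s t g c} + card {g \<in> groups E p s t k. covers E p s t g c'}"
    by (rule card_Un_le)
  also have "\<dots> \<le> (4 * lg (plen p) + 5) + (4 * lg (plen p) + 5)"
    by (intro add_mono card_groups_covering)
  finally show ?thesis by simp
qed

locale one_path =
  fixes E :: "('v \<times> 'v) set" and p :: "'v list" and k :: nat
    and s t :: "nat \<Rightarrow> 'v" and Ps Pt :: "nat \<Rightarrow> 'v list"
  assumes reach_from_s: "i < k \<Longrightarrow> \<exists>l<length p. (s i, p ! l) \<in> E\<^sup>*"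
    and reach_to_t: "i < k \<Longrightarrow> \<exists>l<length p. (p ! l, t i) \<in> E\<^sup>*"
    and Ps: "i < k \<Longrightarrow> dipath E (Ps i) \<and> hd (Ps i) = s i \<and> last (Ps i) = p ! aidx E p s i"
    and Pt: "i < k \<Longrightarrow> dipath E (Pt i) \<and> hd (Pt i) = p ! bidx E p t i \<and> last (Pt i) = t i"
begin

lemma aidx_eq_first_idx:
  assumes "i < k" "x \<in> set (Ps i)"
  shows "aidx E p s i = first_idx E p x"
proof -
  have P: "dipath E (Ps i)" "hd (Ps i) = s i" "last (Ps i) = p ! first_idx E p (s i)"
    using Ps[OF assms(1)] unfolding aidx_def by auto
  then have "(s i, x) \<in> E\<^sup>*" "(x, p ! first_idx E p (s i)) \<in> E\<^sup>*"
    using dipath_mem_reach[OF P(1) assms(2)] by simp_all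
  from first_idx_eq_of_between[OF reach_from_s[OF assms(1)] this] show ?thesis
    unfolding aidx_def by simp
qed

lemma bidx_eq_last_idx:
  assumes "i < k" "x \<in> set (Pt i)"
  shows "bidx E p t i = last_idx E p x"
proof -
  have P: "dipath E (Pt i)" "hd (Pt i) = p ! last_idx E p (t i)" "last (Pt i) = t i"
    using Pt[OF assms(1)] unfolding bidx_def by auto
  then have "(x, t i) \<in> E\<^sup>*" "(p ! last_idx E p (t i), x) \<in> E\<^sup>*"
    using dipath_mem_reach[OF P(1) assms(2)] by simp_all
  from last_idx_eq_of_between[OF reach_to_t[OF assms(1)] this] show ?thesis
    unfolding bidx_def by simp
qed

lemma covers_of_mem_junction_path:
  assumes "g \<in> groups E p s t k" "i \<in> g" "x \<in> set (Ps i) \<union> set (Pt i)"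
  shows "covers E p s t g (first_idx E p x) \<or> covers E p s t g (last_idx E p x)"
proof -
  have "i < k" using groups_subset_lessThan[OF assms(1)] assms(2) by blast
  have "covers E p s t g (aidx E p s i)" "covers E p s t g (bidx E p t i)"
    using assms(2) aidx_le_bidx_in_group[OF assms(1,2)] unfolding covers_def by auto
  moreover from assms(3) consider "x \<in> set (Ps i)" | "x \<in> set (Pt i)" by blast
  ultimately show ?thesis using aidx_eq_first_idx[OF \<open>i < k\<close>] bidx_eq_last_idx[OF \<open>i < k\<close>] by metis
qed

text \<open>Needed because p ! l is unspecified for l \<ge> length p, so the P-part of H_g must be
shown to stay on P.\<close>

lemma Max_bidx_less:
  assumes "g \<in> groups E p s t k" "g \<noteq> {}"
  shows "Max (bidx E p t ` g) < length p"
proof -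
  have "finite g" using groups_subset_lessThan[OF assms(1)] finite_subset by blast
  then have "Max (bidx E p t ` g) \<in> bidx E p t ` g" using assms(2) by (intro Max_in) auto
  then obtain i where "i \<in> g" "Max (bidx E p t ` g) = bidx E p t i" by auto
  moreover have "i < k" using groups_subset_lessThan[OF assms(1)] \<open>i \<in> g\<close> by blast
  ultimately show ?thesis using last_idx_reach(1)[OF reach_to_t] unfolding bidx_def by simp
qed

lemma covers_of_vertex_in_H:
  assumes "g \<in> groups E p s t k" "g \<noteq> {}" "x \<in> HV E p s t Ps Pt g" "x \<notin> set p"
  shows "covers E p s t g (first_idx E p x) \<or> covers E p s t g (last_idx E p x)"
proof -
  have "\<not> (\<exists>l \<le> Max (bidx E p t ` g). x = p ! l)"
    using Max_bidx_less[OF assms(1,2)] assms(4) by auto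
  then obtain i where "i \<in> g" "x \<in> set (Ps i) \<union> set (Pt i)"
    using assms(3) unfolding HV_def by blast
  then show ?thesis using covers_of_mem_junction_path[OF assms(1)] by blast
qed

lemma covers_of_edge_in_H:
  assumes "g \<in> groups E p s t k" "g \<noteq> {}" "e \<in> HE E p s t Ps Pt g" "e \<notin> path_edges p"
  shows "covers E p s t g (first_idx E p (fst e)) \<or> covers E p s t g (last_idx E p (fst e))"
proof -
  have "\<not> (\<exists>l < Max (bidx E p t ` g). e = (p ! l, p ! Suc l))"
    using Max_bidx_less[OF assms(1,2)] assms(4) unfolding path_edges_def by auto
  then obtain i where "i \<in> g" "e \<in> path_edges (Ps i) \<union> path_edges (Pt i)"
    using assms(3) unfolding HE_def by blast
  then have "fst e \<in> set (Ps i) \<union> set (Pt i)" unfolding path_edges_def by auto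
  then show ?thesis using covers_of_mem_junction_path[OF assms(1) \<open>i \<in> g\<close>] by blast
qed

end

theorem mainTheorem13:
  fixes VG :: "'v set" and EG Estar :: "('v \<times> 'v) set" and p :: "'v list"
    and k :: nat and s t :: "nat \<Rightarrow> 'v" and Ps Pt :: "nat \<Rightarrow> 'v list"
  assumes "finite VG" and "EG \<subseteq> VG \<times> VG" and "Estar \<subseteq> EG"
    and "dipath Estar p" and "plen p \<ge> 1"
    and "\<forall>i<k. s i \<in> VG \<and> t i \<in> VG"
    and "\<forall>i<k. \<exists>q. dipath Estar q \<and> hd q = s i \<and> last q = t i \<and> set q \<inter> set p \<noteq> {}"
    and "\<forall>i<k. dipath Estar (Ps i) \<and> hd (Ps i) = s i \<and> last (Ps i) = p ! aidx Estar p s i"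
    and "\<forall>i<k. dipath Estar (Pt i) \<and> hd (Pt i) = p ! bidx Estar p t i \<and> last (Pt i) = t i"
  shows "(\<forall>x \<in> verts_of Estar - set p.
            card {g \<in> groups Estar p s t k. g \<noteq> {} \<and> x \<in> HV Estar p s t Ps Pt g}
              \<le> 10 * lg (plen p) + 12)
       \<and> (\<forall>e \<in> Estar - path_edges p.
            card {g \<in> groups Estar p s t k. g \<noteq> {} \<and> e \<in> HE Estar p s t Ps Pt g}
              \<le> 10 * lg (plen p) + 12)"
proof -
  have reach: "\<exists>l<length p. (s i, p ! l) \<in> Estar\<^sup>*" "\<exists>l<length p. (p ! l, t i) \<in> Estar\<^sup>*"
    if i: "i < k" for i
  proof -
    obtain q where q: "dipath Estar q" "hd q = s i" "last q = t i" "set q \<inter> set p \<noteq> {}"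
      using assms(7) i by blast
    show "\<exists>l<length p. (s i, p ! l) \<in> Estar\<^sup>*" using dipath_meeting_reach(1)[OF q(1,4)] q(2) by simp
    show "\<exists>l<length p. (p ! l, t i) \<in> Estar\<^sup>*" using dipath_meeting_reach(2)[OF q(1,4)] q(3) by simp
  qed
  interpret one_path Estar p k s t Ps Pt
    using reach assms(8,9) by unfold_locales blast+
  show ?thesis
  proof (intro conjI ballI)
    fix x assume x: "x \<in> verts_of Estar - set p"
    have "card {g \<in> groups Estar p s t k. g \<noteq> {} \<and> x \<in> HV Estar p s t Ps Pt g} \<le> 8 * lg (plen p) + 10"
      by (rule card_groups_covering_either) (use covers_of_vertex_in_H x in blast)
    then show "card {g \<in> groups Estar p s t k. g \<noteq> {} \<and> x \<in> HV Estar p s t Ps Pt g} \<le> 10 * lg (plen p) + 12"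
      by linarith
  next
    fix e assume e: "e \<in> Estar - path_edges p"
    have "card {g \<in> groups Estar p s t k. g \<noteq> {} \<and> e \<in> HE Estar p s t Ps Pt g} \<le> 8 * lg (plen p) + 10"
      by (rule card_groups_covering_either) (use covers_of_edge_in_H e in blast)
    then show "card {g \<in> groups Estar p s t k. g \<noteq> {} \<and> e \<in> HE Estar p s t Ps Pt g} \<le> 10 * lg (plen p) + 12"
      by linarith
  qed
qed

end
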